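(* Let $P,R\in\mathrm{Sym}(n,\mathbb{R})$, $Q\in\mathrm{Mat}(n,\mathbb{R})$ and constants $C_1,C_2,C_3>0$ with $\langle Pv,v\rangle\ge C_1|v|^2$, $|Pv|\ge C_1|v|$, $|Qv|\le C_2|v|$, $|Rv|\le C_3|v|$ for all $v\in\mathbb{R}^n$. For $\lambda\in\mathbb{R}$ let $B_\lambda=\begin{bmatrix}P^{-1}&-P^{-1}Q\\-Q^TP^{-1}&Q^TP^{-1}Q-R-\lambda I_n\end{bmatrix}$ and $J=\begin{bmatrix}0&-I_n\\ I_n&0\end{bmatrix}$. Then $JB_\lambda$ is hyperbolic for every $\lambda>C_2^2/C_1+C_3$.
   Context: A real matrix is hyperbolic if it has no eigenvalue on the imaginary axis. *)

theory Defs
  imports "Jordan_Normal_Form.Char_Poly" "Jordan_Normal_Form.Gauss_Jordan_Elimination"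
begin

definition vnorm :: "real vec \<Rightarrow> real" where
  "vnorm v = sqrt (v \<bullet> v)"

definition mat_inv :: "real mat \<Rightarrow> real mat" where
  "mat_inv A = the (mat_inverse A)"

definition hyperbolic :: "real mat \<Rightarrow> bool" where
  "hyperbolic A \<longleftrightarrow> (\<forall>y::real. \<not> eigenvalue (map_mat complex_of_real A) (\<i> * complex_of_real y))"

definition J_mat :: "nat \<Rightarrow> real mat" where
  "J_mat n = four_block_mat (0\<^sub>m n n) (- 1\<^sub>m n) (1\<^sub>m n) (0\<^sub>m n n)"

definition B_mat :: "nat \<Rightarrow> real mat \<Rightarrow> real mat \<Rightarrow> real mat \<Rightarrow> real \<Rightarrow> real mat" where
  "B_mat n P Q R lam =
     four_block_mat (mat_inv P) (- (mat_inv P * Q))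
                    (- (transpose_mat Q * mat_inv P))
                    (transpose_mat Q * mat_inv P * Q - R - lam \<cdot>\<^sub>m 1\<^sub>m n)"

end

theory Submission
  imports Defs
begin

(*
  Suppose J B_lam had an eigenvalue i y, and let a = (a1, a2), b = (b1, b2) be the real and
  imaginary parts of an eigenvector. The first block row gives a1 = Q a2 - y P b2 and
  b1 = Q b2 + y P a2; substituting into the second block row and pairing with a2 and b2 yields,
  with s = |a2|^2 + |b2|^2,
    <R a2, a2> + <R b2, b2> + lam s + y^2 (<P a2, a2> + <P b2, b2>) = 2 y (<Q a2, b2> - <Q b2, a2>).
  The bounds on P, Q and R turn this into (lam - C3 + C1 y^2 - 2 C2 |y|) s <= 0, and the
  coefficient is positive for every y precisely because lam > C2^2/C1 + C3. Hence a2 = b2 = 0,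
  and then a1 = b1 = 0.
*)

lemma scalar_prod_self_nonneg: "0 \<le> (x :: real vec) \<bullet> x"
  unfolding scalar_prod_def by (rule sum_nonneg) auto

lemma scalar_prod_self_eq_0_iff:
  assumes "(x :: real vec) \<in> carrier_vec n"
  shows "x \<bullet> x = 0 \<longleftrightarrow> x = 0\<^sub>v n"
proof
  assume "x \<bullet> x = 0"
  then have "\<forall>i\<in>{0..<dim_vec x}. x $ i * x $ i = 0"
    unfolding scalar_prod_def by (subst sum_nonneg_eq_0_iff[symmetric]) auto
  then show "x = 0\<^sub>v n"
    using assms by (auto intro!: eq_vecI)
qed (use assms in simp)

lemma power2_vnorm: "(vnorm x)\<^sup>2 = x \<bullet> x"
  unfolding vnorm_def by (simp add: scalar_prod_self_nonneg)

lemma young_scalar_prod: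
  fixes x y :: "real vec"
  assumes dim: "dim_vec x = dim_vec y" and t: "t > 0"
  shows "2 * \<bar>x \<bullet> y\<bar> \<le> t * (x \<bullet> x) + (y \<bullet> y) / t"
proof -
  have young: "2 * \<bar>a * b\<bar> \<le> t * (a * a) + b * b / t" for a b :: real
  proof -
    have "0 \<le> (t * \<bar>a\<bar> - \<bar>b\<bar>)\<^sup>2 / t"
      using t by simp
    also have "\<dots> = t * (a * a) + b * b / t - 2 * \<bar>a * b\<bar>"
      using t by (simp add: field_simps power2_eq_square abs_mult)
    finally show ?thesis
      by simp
  qed
  have "2 * \<bar>x \<bullet> y\<bar> \<le> (\<Sum>i<dim_vec y. 2 * \<bar>x $ i * y $ i\<bar>)"
    unfolding scalar_prod_def sum_distrib_left[symmetric] atLeast0LessThan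
    by (simp add: sum_abs)
  also have "\<dots> \<le> (\<Sum>i<dim_vec y. t * (x $ i * x $ i) + y $ i * y $ i / t)"
    by (intro sum_mono young)
  also have "\<dots> = t * (x \<bullet> x) + (y \<bullet> y) / t"
    unfolding scalar_prod_def dim atLeast0LessThan
    by (simp add: sum.distrib sum_distrib_left sum_divide_distrib)
  finally show ?thesis .
qed

lemma abs_scalar_prod_mult_vec_le:
  fixes A :: "real mat"
  assumes A: "A \<in> carrier_mat m n" and u: "u \<in> carrier_vec n" and v: "v \<in> carrier_vec m"
    and c: "c > 0" and bound: "vnorm (A *\<^sub>v u) \<le> c * vnorm u"
  shows "2 * \<bar>(A *\<^sub>v u) \<bullet> v\<bar> \<le> c * (u \<bullet> u + v \<bullet> v)"
proof -
  have "(vnorm (A *\<^sub>v u))\<^sup>2 \<le> (c * vnorm u)\<^sup>2"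
    using bound by (intro power_mono) (simp_all add: vnorm_def scalar_prod_self_nonneg)
  then have "(1 / c) * ((A *\<^sub>v u) \<bullet> (A *\<^sub>v u)) \<le> c * (u \<bullet> u)"
    using c unfolding power_mult_distrib power2_vnorm by (simp add: field_simps power2_eq_square)
  moreover have "2 * \<bar>(A *\<^sub>v u) \<bullet> v\<bar> \<le> (1 / c) * ((A *\<^sub>v u) \<bullet> (A *\<^sub>v u)) + (v \<bullet> v) / (1 / c)"
    using A u v c by (intro young_scalar_prod) auto
  ultimately show ?thesis
    by (simp add: algebra_simps)
qed

lemma hyperbolicI:
  fixes A :: "real mat"
  assumes A: "A \<in> carrier_mat m m"
    and real_pair: "\<And>y a b. a \<in> carrier_vec m \<Longrightarrow> b \<in> carrier_vec m \<Longrightarrow>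
      A *\<^sub>v a = (- y) \<cdot>\<^sub>v b \<Longrightarrow> A *\<^sub>v b = y \<cdot>\<^sub>v a \<Longrightarrow> a = 0\<^sub>v m \<and> b = 0\<^sub>v m"
  shows "hyperbolic A"
  unfolding hyperbolic_def
proof (intro allI notI)
  fix y :: real
  assume "eigenvalue (map_mat complex_of_real A) (\<i> * complex_of_real y)"
  then obtain w where w: "w \<in> carrier_vec m" "w \<noteq> 0\<^sub>v m"
    and eigen: "map_mat complex_of_real A *\<^sub>v w = (\<i> * complex_of_real y) \<cdot>\<^sub>v w"
    unfolding eigenvalue_def eigenvector_def using A by auto
  define a where "a = vec m (\<lambda>i. Re (w $ i))"
  define b where "b = vec m (\<lambda>i. Im (w $ i))"
  have a: "a \<in> carrier_vec m" and b: "b \<in> carrier_vec m"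
    unfolding a_def b_def by auto
  have Re_Im: "Re ((map_mat complex_of_real A *\<^sub>v w) $ i) = (A *\<^sub>v a) $ i"
    "Im ((map_mat complex_of_real A *\<^sub>v w) $ i) = (A *\<^sub>v b) $ i" if "i < m" for i
    using that A w(1) by (auto simp: scalar_prod_def a_def b_def Re_sum Im_sum)
  have "(A *\<^sub>v a) $ i = ((- y) \<cdot>\<^sub>v b) $ i \<and> (A *\<^sub>v b) $ i = (y \<cdot>\<^sub>v a) $ i" if i: "i < m" for i
  proof -
    have "(map_mat complex_of_real A *\<^sub>v w) $ i = \<i> * complex_of_real y * w $ i"
      using eigen i w(1) by simp
    then show ?thesis
      using Re_Im[OF i] i by (simp add: a_def b_def)
  qed
  then have "A *\<^sub>v a = (- y) \<cdot>\<^sub>v b" "A *\<^sub>v b = y \<cdot>\<^sub>v a"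
    using A a b by (auto intro!: eq_vecI)
  with real_pair a b have zero: "a = 0\<^sub>v m" "b = 0\<^sub>v m"
    by blast+
  have "w = 0\<^sub>v m"
  proof (rule eq_vecI)
    fix i assume "i < dim_vec (0\<^sub>v m)"
    then have "i < m" by simp
    moreover have "a $ i = 0" "b $ i = 0"
      using zero \<open>i < m\<close> by simp_all
    ultimately show "w $ i = 0\<^sub>v m $ i"
      by (simp add: a_def b_def complex_eq_iff)
  qed (use w(1) in simp)
  with w(2) show False ..
qed

lemma det_nonzero_if_coercive:
  fixes P :: "real mat"
  assumes P: "P \<in> carrier_mat n n" and C: "C > 0"
    and coerc: "\<And>v. v \<in> carrier_vec n \<Longrightarrow> (P *\<^sub>v v) \<bullet> v \<ge> C * (vnorm v)\<^sup>2"
  shows "det P \<noteq> 0"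
proof
  assume "det P = 0"
  then obtain v where v: "v \<in> carrier_vec n" "v \<noteq> 0\<^sub>v n" "P *\<^sub>v v = 0\<^sub>v n"
    using det_0_iff_vec_prod_zero[OF P] by auto
  have "C * (v \<bullet> v) \<le> 0"
    using coerc[OF v(1)] v by (simp add: power2_vnorm)
  then have "v \<bullet> v = 0"
    using C scalar_prod_self_nonneg[of v] by (simp add: mult_le_0_iff)
  with v(1,2) show False
    by (simp add: scalar_prod_self_eq_0_iff)
qed

lemma mat_inv_right:
  fixes P :: "real mat"
  assumes P: "P \<in> carrier_mat n n" and det: "det P \<noteq> 0"
  shows "mat_inv P \<in> carrier_mat n n" "P * mat_inv P = 1\<^sub>m n"
proof -
  have "P \<in> Units (ring_mat TYPE(real) n ())"
    using det_non_zero_imp_unit[OF P det] .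
  then obtain P' where "mat_inverse P = Some P'"
    using mat_inverse(1)[OF P] by fastforce
  then show "mat_inv P \<in> carrier_mat n n" "P * mat_inv P = 1\<^sub>m n"
    using mat_inverse(2)[OF P] unfolding mat_inv_def by auto
qed

lemma smult_mat_mult_vec:
  assumes "A \<in> carrier_mat nr nc" and "v \<in> carrier_vec nc"
  shows "(k \<cdot>\<^sub>m A) *\<^sub>v v = k \<cdot>\<^sub>v (A *\<^sub>v (v :: 'a :: comm_ring vec))"
  using assms by (auto intro!: eq_vecI)

lemma smult_append_vec: "k \<cdot>\<^sub>v (u @\<^sub>v v) = (k \<cdot>\<^sub>v u) @\<^sub>v (k \<cdot>\<^sub>v (v :: 'a :: times vec))"
  by (intro eq_vecI) auto

lemma J_B_mult_vec:
  fixes P Q R :: "real mat"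
  assumes P: "mat_inv P \<in> carrier_mat n n" and Q: "Q \<in> carrier_mat n n" and R: "R \<in> carrier_mat n n"
    and x1: "x1 \<in> carrier_vec n" and x2: "x2 \<in> carrier_vec n"
  defines "z \<equiv> mat_inv P *\<^sub>v (x1 - Q *\<^sub>v x2)"
  shows "(J_mat n * B_mat n P Q R lam) *\<^sub>v (x1 @\<^sub>v x2) =
    (transpose_mat Q *\<^sub>v z + R *\<^sub>v x2 + lam \<cdot>\<^sub>v x2) @\<^sub>v z"
proof -
  let ?Pi = "mat_inv P" and ?Qt = "transpose_mat Q"
  let ?D = "?Qt * ?Pi * Q - R - lam \<cdot>\<^sub>m 1\<^sub>m n"
  have D: "?D \<in> carrier_mat n n"
    using P Q R by auto
  have J: "J_mat n \<in> carrier_mat (n + n) (n + n)"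
    unfolding J_mat_def by auto
  have B: "B_mat n P Q R lam \<in> carrier_mat (n + n) (n + n)"
    unfolding B_mat_def using P Q D by auto
  define u1 where "u1 = ?Pi *\<^sub>v x1 + (- (?Pi * Q)) *\<^sub>v x2"
  define u2 where "u2 = (- (?Qt * ?Pi)) *\<^sub>v x1 + ?D *\<^sub>v x2"
  have u1: "u1 \<in> carrier_vec n" and u2: "u2 \<in> carrier_vec n"
    unfolding u1_def u2_def using P Q D x1 x2 by auto
  have "B_mat n P Q R lam *\<^sub>v (x1 @\<^sub>v x2) = u1 @\<^sub>v u2"
    unfolding B_mat_def u1_def u2_def
    by (rule four_block_mat_mult_vec[OF P _ _ D x1 x2]) (use P Q in auto)
  moreover have "J_mat n *\<^sub>v (u1 @\<^sub>v u2) = (- u2) @\<^sub>v u1"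
    unfolding J_mat_def using u1 u2
    by (subst four_block_mat_mult_vec[OF _ _ _ _ u1 u2]) (auto intro!: eq_vecI)
  moreover have "u1 = z"
    unfolding u1_def z_def using P Q x1 x2
    by (subst mult_minus_distrib_mat_vec[OF P]) (auto intro!: eq_vecI)
  moreover have "- u2 = ?Qt *\<^sub>v z + R *\<^sub>v x2 + lam \<cdot>\<^sub>v x2"
  proof -
    have "?D *\<^sub>v x2 = (?Qt * ?Pi * Q - R) *\<^sub>v x2 - (lam \<cdot>\<^sub>m 1\<^sub>m n) *\<^sub>v x2"
      by (rule minus_mult_distrib_mat_vec[of _ n n]) (use P Q R x2 in auto)
    also have "(?Qt * ?Pi * Q - R) *\<^sub>v x2 = (?Qt * ?Pi * Q) *\<^sub>v x2 - R *\<^sub>v x2"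
      by (rule minus_mult_distrib_mat_vec[of _ n n]) (use P Q R x2 in auto)
    also have "(?Qt * ?Pi * Q) *\<^sub>v x2 = ?Qt *\<^sub>v (?Pi *\<^sub>v (Q *\<^sub>v x2))"
      using P Q x2 by (simp add: assoc_mult_mat_vec[of _ n n _ n])
    also have "(lam \<cdot>\<^sub>m 1\<^sub>m n) *\<^sub>v x2 = lam \<cdot>\<^sub>v x2"
      using x2 by (simp add: smult_mat_mult_vec[of _ n n])
    finally have "?D *\<^sub>v x2 = ?Qt *\<^sub>v (?Pi *\<^sub>v (Q *\<^sub>v x2)) - R *\<^sub>v x2 - lam \<cdot>\<^sub>v x2" .
    moreover have "(- (?Qt * ?Pi)) *\<^sub>v x1 = - (?Qt *\<^sub>v (?Pi *\<^sub>v x1))"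
      using P Q x1 by (simp add: assoc_mult_mat_vec[of _ n n _ n])
    moreover have "?Qt *\<^sub>v z = ?Qt *\<^sub>v (?Pi *\<^sub>v x1) - ?Qt *\<^sub>v (?Pi *\<^sub>v (Q *\<^sub>v x2))"
      unfolding z_def using P Q x1 x2 by (simp add: mult_minus_distrib_mat_vec[of _ n n])
    ultimately show ?thesis
      unfolding u2_def using P Q R x1 x2 by (auto intro!: eq_vecI)
  qed
  ultimately show ?thesis
    using J B x1 x2 by simp
qed

lemma J_B_mult_vec_eqD:
  fixes P Q R :: "real mat"
  assumes P: "P \<in> carrier_mat n n" and Q: "Q \<in> carrier_mat n n" and R: "R \<in> carrier_mat n n"
    and Pi: "mat_inv P \<in> carrier_mat n n" and inv: "P * mat_inv P = 1\<^sub>m n"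
    and x1: "x1 \<in> carrier_vec n" and x2: "x2 \<in> carrier_vec n" and w1: "w1 \<in> carrier_vec n"
    and eq: "(J_mat n * B_mat n P Q R lam) *\<^sub>v (x1 @\<^sub>v x2) = w1 @\<^sub>v w2"
  shows "x1 = Q *\<^sub>v x2 + P *\<^sub>v w2"
    and "w1 = transpose_mat Q *\<^sub>v w2 + R *\<^sub>v x2 + lam \<cdot>\<^sub>v x2"
proof -
  define z where "z = mat_inv P *\<^sub>v (x1 - Q *\<^sub>v x2)"
  have z: "z \<in> carrier_vec n"
    unfolding z_def using Pi Q x1 x2 by simp
  have "(transpose_mat Q *\<^sub>v z + R *\<^sub>v x2 + lam \<cdot>\<^sub>v x2) @\<^sub>v z = w1 @\<^sub>v w2"
    using eq J_B_mult_vec[OF Pi Q R x1 x2] unfolding z_def by simp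
  moreover have "transpose_mat Q *\<^sub>v z + R *\<^sub>v x2 + lam \<cdot>\<^sub>v x2 \<in> carrier_vec n"
    using Q R x2 z by simp
  ultimately have w1_eq: "w1 = transpose_mat Q *\<^sub>v z + R *\<^sub>v x2 + lam \<cdot>\<^sub>v x2" and w2_eq: "w2 = z"
    using append_vec_eq[OF _ w1] by auto
  have "P *\<^sub>v z = x1 - Q *\<^sub>v x2"
    unfolding z_def using P Pi Q x1 x2
    by (simp add: assoc_mult_mat_vec[symmetric, of _ n n _ n] inv)
  then show "x1 = Q *\<^sub>v x2 + P *\<^sub>v w2"
    using P Q x1 x2 unfolding w2_eq by (auto intro!: eq_vecI)
  show "w1 = transpose_mat Q *\<^sub>v w2 + R *\<^sub>v x2 + lam \<cdot>\<^sub>v x2"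
    using w1_eq w2_eq by simp
qed

lemma imaginary_pair_energy_identity:
  fixes P Q R :: "real mat" and a1 a2 b1 b2 :: "real vec"
  assumes P: "P \<in> carrier_mat n n" and Q: "Q \<in> carrier_mat n n" and R: "R \<in> carrier_mat n n"
    and a: "a1 \<in> carrier_vec n" "a2 \<in> carrier_vec n" and b: "b1 \<in> carrier_vec n" "b2 \<in> carrier_vec n"
    and a_top: "a1 = Q *\<^sub>v a2 + P *\<^sub>v ((- y) \<cdot>\<^sub>v b2)"
    and a_bottom: "(- y) \<cdot>\<^sub>v b1 = transpose_mat Q *\<^sub>v ((- y) \<cdot>\<^sub>v b2) + R *\<^sub>v a2 + lam \<cdot>\<^sub>v a2"
    and b_top: "b1 = Q *\<^sub>v b2 + P *\<^sub>v (y \<cdot>\<^sub>v a2)"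
    and b_bottom: "y \<cdot>\<^sub>v a1 = transpose_mat Q *\<^sub>v (y \<cdot>\<^sub>v a2) + R *\<^sub>v b2 + lam \<cdot>\<^sub>v b2"
  shows "(R *\<^sub>v a2) \<bullet> a2 + (R *\<^sub>v b2) \<bullet> b2 + lam * (a2 \<bullet> a2 + b2 \<bullet> b2)
           + y\<^sup>2 * ((P *\<^sub>v a2) \<bullet> a2 + (P *\<^sub>v b2) \<bullet> b2)
         = 2 * y * ((Q *\<^sub>v a2) \<bullet> b2 - (Q *\<^sub>v b2) \<bullet> a2)"
proof -
  have Qt: "(transpose_mat Q *\<^sub>v u) \<bullet> v = (Q *\<^sub>v v) \<bullet> u"
    if "u \<in> carrier_vec n" "v \<in> carrier_vec n" for u v
    using transpose_vec_mult_scalar[OF Q that(2,1)] comm_scalar_prod[OF that(1), of "Q *\<^sub>v v"] Q that(2)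
    by simp
  have "((- y) \<cdot>\<^sub>v b1) \<bullet> a2 = (transpose_mat Q *\<^sub>v ((- y) \<cdot>\<^sub>v b2) + R *\<^sub>v a2 + lam \<cdot>\<^sub>v a2) \<bullet> a2"
    using a_bottom by simp
  then have "(R *\<^sub>v a2) \<bullet> a2 + lam * (a2 \<bullet> a2) = y * ((Q *\<^sub>v a2) \<bullet> b2) - y * (b1 \<bullet> a2)"
    using P Q R a b by (simp add: add_scalar_prod_distrib[of _ n] Qt mult_mat_vec)
  moreover have "b1 \<bullet> a2 = (Q *\<^sub>v b2) \<bullet> a2 + y * ((P *\<^sub>v a2) \<bullet> a2)"
    unfolding b_top using P Q a b by (simp add: add_scalar_prod_distrib[of _ n] mult_mat_vec)
  moreover have "(y \<cdot>\<^sub>v a1) \<bullet> b2 = (transpose_mat Q *\<^sub>v (y \<cdot>\<^sub>v a2) + R *\<^sub>v b2 + lam \<cdot>\<^sub>v b2) \<bullet> b2"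
    using b_bottom by simp
  then have "(R *\<^sub>v b2) \<bullet> b2 + lam * (b2 \<bullet> b2) = y * (a1 \<bullet> b2) - y * ((Q *\<^sub>v b2) \<bullet> a2)"
    using P Q R a b by (simp add: add_scalar_prod_distrib[of _ n] Qt mult_mat_vec)
  moreover have "a1 \<bullet> b2 = (Q *\<^sub>v a2) \<bullet> b2 - y * ((P *\<^sub>v b2) \<bullet> b2)"
    unfolding a_top using P Q a b by (simp add: add_scalar_prod_distrib[of _ n] mult_mat_vec)
  ultimately show ?thesis
    by (simp add: algebra_simps power2_eq_square)
qed

lemma abs_linear_less_quadratic:
  fixes C1 C2 C3 lam y :: real
  assumes C1: "C1 > 0" and lam: "lam > C2\<^sup>2 / C1 + C3"
  shows "2 * C2 * \<bar>y\<bar> < lam - C3 + C1 * y\<^sup>2"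
proof -
  have "C2\<^sup>2 < C1 * (lam - C3)"
    using lam C1 by (simp add: field_simps)
  moreover have "C1 * (lam - C3 + C1 * y\<^sup>2 - 2 * C2 * \<bar>y\<bar>) = (C1 * (lam - C3) - C2\<^sup>2) + (C1 * \<bar>y\<bar> - C2)\<^sup>2"
    by (simp add: power2_eq_square algebra_simps)
  ultimately have "0 < C1 * (lam - C3 + C1 * y\<^sup>2 - 2 * C2 * \<bar>y\<bar>)"
    using zero_le_power2[of "C1 * \<bar>y\<bar> - C2"] by linarith
  then show ?thesis
    using C1 by (simp add: zero_less_mult_iff)
qed

lemma imaginary_pair_energy_vanishes:
  fixes P Q R :: "real mat" and u v :: "real vec"
  assumes P: "P \<in> carrier_mat n n" and Q: "Q \<in> carrier_mat n n" and R: "R \<in> carrier_mat n n"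
    and u: "u \<in> carrier_vec n" and v: "v \<in> carrier_vec n"
    and C: "C1 > 0" "C2 > 0" "C3 > 0" and lam: "lam > C2\<^sup>2 / C1 + C3"
    and coerc: "\<And>x. x \<in> carrier_vec n \<Longrightarrow> (P *\<^sub>v x) \<bullet> x \<ge> C1 * (vnorm x)\<^sup>2"
    and Qbd: "\<And>x. x \<in> carrier_vec n \<Longrightarrow> vnorm (Q *\<^sub>v x) \<le> C2 * vnorm x"
    and Rbd: "\<And>x. x \<in> carrier_vec n \<Longrightarrow> vnorm (R *\<^sub>v x) \<le> C3 * vnorm x"
    and energy: "(R *\<^sub>v u) \<bullet> u + (R *\<^sub>v v) \<bullet> v + lam * (u \<bullet> u + v \<bullet> v)
                   + y\<^sup>2 * ((P *\<^sub>v u) \<bullet> u + (P *\<^sub>v v) \<bullet> v)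
                 = 2 * y * ((Q *\<^sub>v u) \<bullet> v - (Q *\<^sub>v v) \<bullet> u)"
  shows "u = 0\<^sub>v n \<and> v = 0\<^sub>v n"
proof -
  define s where "s = u \<bullet> u + v \<bullet> v"
  have s: "0 \<le> s"
    unfolding s_def by (simp add: add_nonneg_nonneg scalar_prod_self_nonneg)
  have "C1 * s \<le> (P *\<^sub>v u) \<bullet> u + (P *\<^sub>v v) \<bullet> v"
    using coerc[OF u] coerc[OF v] unfolding s_def power2_vnorm by (simp add: distrib_left)
  then have "y\<^sup>2 * (C1 * s) \<le> y\<^sup>2 * ((P *\<^sub>v u) \<bullet> u + (P *\<^sub>v v) \<bullet> v)"
    by (simp add: mult_left_mono)
  moreover have "- (C3 * s) \<le> (R *\<^sub>v u) \<bullet> u + (R *\<^sub>v v) \<bullet> v"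
    using abs_scalar_prod_mult_vec_le[OF R u u C(3) Rbd[OF u]]
      abs_scalar_prod_mult_vec_le[OF R v v C(3) Rbd[OF v]]
    unfolding s_def by (simp add: algebra_simps)
  ultimately have lower: "(lam - C3 + C1 * y\<^sup>2) * s \<le> 2 * y * ((Q *\<^sub>v u) \<bullet> v - (Q *\<^sub>v v) \<bullet> u)"
    using energy unfolding s_def by (simp add: algebra_simps)
  have "2 * \<bar>(Q *\<^sub>v u) \<bullet> v\<bar> \<le> C2 * s" "2 * \<bar>(Q *\<^sub>v v) \<bullet> u\<bar> \<le> C2 * s"
    using abs_scalar_prod_mult_vec_le[OF Q u v C(2) Qbd[OF u]]
      abs_scalar_prod_mult_vec_le[OF Q v u C(2) Qbd[OF v]]
    unfolding s_def by (simp_all add: add.commute)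
  then have Q_form: "2 * \<bar>(Q *\<^sub>v u) \<bullet> v - (Q *\<^sub>v v) \<bullet> u\<bar> \<le> 2 * (C2 * s)"
    by (smt (verit) abs_triangle_ineq4)
  have "2 * y * ((Q *\<^sub>v u) \<bullet> v - (Q *\<^sub>v v) \<bullet> u) \<le> \<bar>y\<bar> * (2 * \<bar>(Q *\<^sub>v u) \<bullet> v - (Q *\<^sub>v v) \<bullet> u\<bar>)"
    using abs_ge_self[of "y * ((Q *\<^sub>v u) \<bullet> v - (Q *\<^sub>v v) \<bullet> u)"] by (simp add: abs_mult)
  also have "\<dots> \<le> \<bar>y\<bar> * (2 * (C2 * s))"
    using Q_form by (rule mult_left_mono) simp
  finally have upper: "2 * y * ((Q *\<^sub>v u) \<bullet> v - (Q *\<^sub>v v) \<bullet> u) \<le> (2 * C2 * \<bar>y\<bar>) * s"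
    by (simp add: algebra_simps)
  from lower upper have "(lam - C3 + C1 * y\<^sup>2 - 2 * C2 * \<bar>y\<bar>) * s \<le> 0"
    by (simp add: algebra_simps)
  then have "s = 0"
    using abs_linear_less_quadratic[OF C(1) lam, of y] s by (simp add: mult_le_0_iff)
  then have "u \<bullet> u = 0" "v \<bullet> v = 0"
    unfolding s_def using scalar_prod_self_nonneg[of u] scalar_prod_self_nonneg[of v] by linarith+
  then show ?thesis
    using u v by (simp add: scalar_prod_self_eq_0_iff)
qed

theorem corollary2p4:
  fixes n :: nat and P Q R :: "real mat" and C1 C2 C3 :: real
  assumes P: "P \<in> carrier_mat n n" and Psym: "transpose_mat P = P"
      and Q: "Q \<in> carrier_mat n n"
      and R: "R \<in> carrier_mat n n" and Rsym: "transpose_mat R = R"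
      and C: "C1 > 0" "C2 > 0" "C3 > 0"
      and coerc: "\<And>v. v \<in> carrier_vec n \<Longrightarrow> (P *\<^sub>v v) \<bullet> v \<ge> C1 * (vnorm v)\<^sup>2"
      and Plow: "\<And>v. v \<in> carrier_vec n \<Longrightarrow> vnorm (P *\<^sub>v v) \<ge> C1 * vnorm v"
      and Qbd: "\<And>v. v \<in> carrier_vec n \<Longrightarrow> vnorm (Q *\<^sub>v v) \<le> C2 * vnorm v"
      and Rbd: "\<And>v. v \<in> carrier_vec n \<Longrightarrow> vnorm (R *\<^sub>v v) \<le> C3 * vnorm v"
  shows "\<forall>lam::real. lam > C2\<^sup>2 / C1 + C3 \<longrightarrow> hyperbolic (J_mat n * B_mat n P Q R lam)"
proof (intro allI impI)
  fix lam :: real assume lam: "lam > C2\<^sup>2 / C1 + C3"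
  have det: "det P \<noteq> 0"
    using det_nonzero_if_coercive[OF P C(1) coerc] .
  note Pi = mat_inv_right[OF P det]
  have JB: "J_mat n * B_mat n P Q R lam \<in> carrier_mat (n + n) (n + n)"
    unfolding J_mat_def B_mat_def using Pi Q R by auto
  show "hyperbolic (J_mat n * B_mat n P Q R lam)"
  proof (rule hyperbolicI[OF JB])
    fix y and a b :: "real vec"
    assume a: "a \<in> carrier_vec (n + n)" and b: "b \<in> carrier_vec (n + n)"
      and ab: "(J_mat n * B_mat n P Q R lam) *\<^sub>v a = (- y) \<cdot>\<^sub>v b"
      and ba: "(J_mat n * B_mat n P Q R lam) *\<^sub>v b = y \<cdot>\<^sub>v a"
    obtain a1 a2 b1 b2 where parts: "a1 \<in> carrier_vec n" "a2 \<in> carrier_vec n"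
      "b1 \<in> carrier_vec n" "b2 \<in> carrier_vec n" and split: "a = a1 @\<^sub>v a2" "b = b1 @\<^sub>v b2"
      using vec_first_last_append[OF a] vec_first_last_append[OF b] vec_first_carrier vec_last_carrier
      by metis
    have eqs: "a1 = Q *\<^sub>v a2 + P *\<^sub>v ((- y) \<cdot>\<^sub>v b2)"
      "(- y) \<cdot>\<^sub>v b1 = transpose_mat Q *\<^sub>v ((- y) \<cdot>\<^sub>v b2) + R *\<^sub>v a2 + lam \<cdot>\<^sub>v a2"
      "b1 = Q *\<^sub>v b2 + P *\<^sub>v (y \<cdot>\<^sub>v a2)"
      "y \<cdot>\<^sub>v a1 = transpose_mat Q *\<^sub>v (y \<cdot>\<^sub>v a2) + R *\<^sub>v b2 + lam \<cdot>\<^sub>v b2"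
      using J_B_mult_vec_eqD[OF P Q R Pi, of _ _ "(- y) \<cdot>\<^sub>v b1" lam "(- y) \<cdot>\<^sub>v b2"]
        J_B_mult_vec_eqD[OF P Q R Pi, of _ _ "y \<cdot>\<^sub>v a1" lam "y \<cdot>\<^sub>v a2"] ab ba parts
      unfolding split by (auto simp: smult_append_vec)
    have "a2 = 0\<^sub>v n \<and> b2 = 0\<^sub>v n"
      using imaginary_pair_energy_vanishes[OF P Q R parts(2,4) C lam coerc Qbd Rbd]
        imaginary_pair_energy_identity[OF P Q R parts eqs] by blast
    then show "a = 0\<^sub>v (n + n) \<and> b = 0\<^sub>v (n + n)"
      using eqs(1,3) P Q parts unfolding split by auto
  qed
qed

end
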